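(* Fix $\mathcal I_{1:V}=(\mathscr C_t,x_t)_{t=1}^V$, $K\ge0$, an integer $r\ge1$, and $\lambda>0$, and let $\mathcal G=L_K(\mathcal I_{1:V})$. Then the relaxation $$\mathbf{Rel}(\mathcal G\mid y_{1:t})=\mathbb E_{\boldsymbol\epsilon_{t+1:V}}\sup_{\mathbf U\in\mathcal{L}\mathrm{as}(r,L_{x_{1:V}})}\Big\{2\sum_{j=t+1}^V\sum_{k=1}^\kappa\boldsymbol\epsilon_{j,k}\|\mathbf U_{\{j\},k}\|^2+\sum_{s=1}^t\|\mathbf U_{\{s\},y_s}\|^2-\lambda\sum_{c\in\cup_{t}\mathscr C_t}\sum_{\alpha\in[\kappa]^{S_c}}R_c(\alpha)\|\mathbf U_{S_c,\alpha}\|^2\Big\}-t+\lambda K$$ is admissible for prediction with respect to $\mathcal G$, where $\boldsymbol\epsilon_{j}\in\{-1,1\}^\kappa$ are vectors of independent Rademacher variables. Moreover, the randomized strategy which at round $t$ draws $\boldsymbol\epsilon_{t+1:V}$ and predicts $\widehat y_t\sim\widehat q_t(\boldsymbol\epsilon_{t+1:V})$, where $$\widehat q_t(\boldsymbol\epsilon_{t+1:V})=\operatorname*{argmin}_{q\in\Delta([\kappa])}\sup_{y_t\in[\kappa]}\Big\{\sup_{\mathbf U\in\mathcal{L}\mathrm{as}(r,L_{x_{1:V}})}\Big\{2\sum_{j=t+1}^V\sum_{k=1}^\kappa\boldsymbol\epsilon_{j,k}\|\mathbf U_{\{j\},k}\|^2+\sum_{s=1}^t\|\mathbf U_{\{s\},y_s}\|^2-\lambda\sum_{c\in\cup_t\mathscr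 C_t}\sum_{\alpha\in[\kappa]^{S_c}}R_c(\alpha)\|\mathbf U_{S_c,\alpha}\|^2\Big\}-q[y_t]\Big\},$$ satisfies, for every $t\in[V]$ and $y_{1:t-1}$, $\max_{y_t\in[\kappa]}\{\mathbb E[\mathbf 1\{\widehat y_t\ne y_t\}]+\mathbf{Rel}(\mathcal G\mid y_{1:t})\}\le\mathbf{Rel}(\mathcal G\mid y_{1:t-1})$, the expectation being over $\boldsymbol\epsilon_{t+1:V}$ and $\widehat y_t$.
   Context: Notation: $[n]=\{1,\dots,n\}$, $a_{1:t}=(a_1,\dots,a_t)$, $\Delta(A)$ the set of distributions on $A$, $q[y]$ the probability of $y$ under $q$. Setting: $V\ge1$, $\kappa\ge2$, a set $\mathcal X$, a class $L$ of functions $\mathcal X\to[\kappa]$. A constraint $c$ is a pair $(S_c,R_c)$, $S_c\subseteq[V]$, $R_c:[\kappa]^{S_c}\to\mathbb R_{\ge0}$; for $g\in[\kappa]^V$, $c(g)=R_c(g|_{S_c})$. $\mathcal I_t=(\mathscr C_t,x_t)$ with $x_t\in\mathcal X$ and $\mathscr C_t$ a finite set of constraints. $L_K(\mathcal I_{1:V})=\{f\in L:\sum_{c\in\cup_t\mathscr C_t}c((f(x_1),\dots,f(x_V)))\le K\}$. Loss $\ell(\widehat y,y)=\mathbf 1\{\widehat y\ne y\}$. Standing assumption: $L_{x_{1:V}}:=\{M\in\{0,1\}^{V\times\kappa}:\exists f\in L,\ M_{t,i}=\mathbf 1\{f(x_t)=i\}\}$ equals $\{0,1\}^{V\times\kappa}\cap\{M: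 M^\top B^j\le c_j,\ j\in[d]\}$ for some $B^j\in\mathbb R^{V\times\kappa}$, $c_j\in\mathbb R$. $\mathcal{L}\mathrm{as}(r,L_{x_{1:V}})$ is the set of families of vectors $\mathbf U_{S,\alpha}$ ($S\subseteq[V]$, $|S|\le r$, $\alpha\in[\kappa]^S$, including $\mathbf U_{\emptyset,\emptyset}$) satisfying: $\langle\mathbf U_{S_1,\alpha_1},\mathbf U_{S_2,\alpha_2}\rangle=0$ whenever $\alpha_1,\alpha_2$ disagree on $S_1\cap S_2$; $\langle\mathbf U_{S_1,\alpha_1},\mathbf U_{S_2,\alpha_2}\rangle=\langle\mathbf U_{S_3,\alpha_3},\mathbf U_{S_4,\alpha_4}\rangle$ whenever $S_1\cup S_2=S_3\cup S_4$ and $\alpha_1\circ\alpha_2=\alpha_3\circ\alpha_4$ (combined assignments); $\sum_{k}\|\mathbf U_{\{i\},k}\|^2=1$ for all $i$, $\|\mathbf U_{\emptyset,\emptyset}\|^2=1$; all inner products are $\ge0$; and for all $S,\alpha,j$: $\sum_{v\in[V],\beta\in[\kappa]}\|\mathbf U_{S\cup\{v\},\alpha\circ\beta}\|^2B^j_{(v,\beta)}\le c_j\|\mathbf U_{S,\alpha}\|^2$. Admissibility: for fixed $x_{1:V}$ and class $\mathcal G$, functions $\mathbf{Rel}(\mathcal G\mid y_{1:t})$, $t=0,\dots,V$, are admissible if (i) $\mathbf{Rel}(\mathcal G\mid y_{1:V})\ge-\inf_{f\in\mathcal G}\sum_t\ell(f(x_t),y_t)$ for all $y_{1:V}$, and (ii)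 $\inf_{q\in\Delta([\kappa])}\sup_{y_t}\{\mathbb E_{\widehat y\sim q}\ell(\widehat y,y_t)+\mathbf{Rel}(\mathcal G\mid y_{1:t})\}\le\mathbf{Rel}(\mathcal G\mid y_{1:t-1})$ for all $t$ and $y_{1:t-1}$. *)

theory Defs
  imports "HOL-Analysis.Analysis"
begin

definition loss :: "nat \<Rightarrow> nat \<Rightarrow> real" where
  "loss a b = (if a \<noteq> b then 1 else 0)"

text \<open>Assignments \<alpha> in [\<kappa>]^S, represented extensionally (undefined outside S).\<close>
definition asg :: "nat set \<Rightarrow> nat \<Rightarrow> (nat \<Rightarrow> nat) set" where
  "asg S \<kappa> = PiE S (\<lambda>_. {1..\<kappa>})"

definition sg :: "nat \<Rightarrow> nat \<Rightarrow> nat \<Rightarrow> nat" where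
  "sg j k = (\<lambda>v. if v = j then k else undefined)"

definition consistent :: "nat set \<Rightarrow> (nat \<Rightarrow> nat) \<Rightarrow> nat set \<Rightarrow> (nat \<Rightarrow> nat) \<Rightarrow> bool" where
  "consistent S1 a1 S2 a2 \<longleftrightarrow> (\<forall>v\<in>S1 \<inter> S2. a1 v = a2 v)"

definition comb :: "nat set \<Rightarrow> (nat \<Rightarrow> nat) \<Rightarrow> nat set \<Rightarrow> (nat \<Rightarrow> nat) \<Rightarrow> nat \<Rightarrow> nat" where
  "comb S1 a1 S2 a2 = (\<lambda>v. if v \<in> S1 then a1 v else if v \<in> S2 then a2 v else undefined)"

definition idx :: "nat \<Rightarrow> nat \<Rightarrow> nat \<Rightarrow> (nat set \<times> (nat \<Rightarrow> nat)) set" where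
  "idx V \<kappa> r = {(S, \<alpha>). S \<subseteq> {1..V} \<and> card S \<le> r \<and> \<alpha> \<in> asg S \<kappa>}"

text \<open>The level-r Lasserre set Las(r, L_{x_{1:V}}) w.r.t. the polytope description
  (B^j, c_j), j \<in> [d]; B j v \<beta> stands for B^j_{(v,\<beta>)}.\<close>
definition lasserre ::
  "nat \<Rightarrow> nat \<Rightarrow> nat \<Rightarrow> nat \<Rightarrow> (nat \<Rightarrow> nat \<Rightarrow> nat \<Rightarrow> real) \<Rightarrow> (nat \<Rightarrow> real)
     \<Rightarrow> (nat set \<Rightarrow> (nat \<Rightarrow> nat) \<Rightarrow> 'v::real_inner) set" where
  "lasserre V \<kappa> r d B c = {U.
     (\<forall>(S1, a1)\<in>idx V \<kappa> r. \<forall>(S2, a2)\<in>idx V \<kappa> r.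
        \<not> consistent S1 a1 S2 a2 \<longrightarrow> inner (U S1 a1) (U S2 a2) = 0) \<and>
     (\<forall>(S1, a1)\<in>idx V \<kappa> r. \<forall>(S2, a2)\<in>idx V \<kappa> r. \<forall>(S3, a3)\<in>idx V \<kappa> r. \<forall>(S4, a4)\<in>idx V \<kappa> r.
        consistent S1 a1 S2 a2 \<and> consistent S3 a3 S4 a4 \<and> S1 \<union> S2 = S3 \<union> S4 \<and>
        comb S1 a1 S2 a2 = comb S3 a3 S4 a4 \<longrightarrow>
        inner (U S1 a1) (U S2 a2) = inner (U S3 a3) (U S4 a4)) \<and>
     (\<forall>i\<in>{1..V}. (\<Sum>k\<in>{1..\<kappa>}. (norm (U {i} (sg i k)))\<^sup>2) = 1) \<and>
     (norm (U {} (\<lambda>_. undefined)))\<^sup>2 = 1 \<and>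
     (\<forall>(S1, a1)\<in>idx V \<kappa> r. \<forall>(S2, a2)\<in>idx V \<kappa> r. 0 \<le> inner (U S1 a1) (U S2 a2)) \<and>
     (\<forall>(S, \<alpha>)\<in>idx V \<kappa> r. card S < r \<longrightarrow> (\<forall>j\<in>{1..d}.
        (\<Sum>v\<in>{1..V}. \<Sum>\<beta>\<in>{1..\<kappa>}.
           (if v \<in> S \<and> \<alpha> v \<noteq> \<beta> then 0
            else (norm (U (S \<union> {v}) (comb S \<alpha> {v} (sg v \<beta>))))\<^sup>2) * B j v \<beta>)
        \<le> c j * (norm (U S \<alpha>))\<^sup>2))}"

definition signs :: "nat \<Rightarrow> nat \<Rightarrow> nat \<Rightarrow> (nat \<Rightarrow> nat \<Rightarrow> real) set" where
  "signs V \<kappa> t = PiE {t+1..V} (\<lambda>_. PiE {1..\<kappa>} (\<lambda>_. {-1, 1}))"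

text \<open>Constraint set: pairs (S_c, R_c); the union of all C_t.\<close>
type_synonym constr = "nat set \<times> ((nat \<Rightarrow> nat) \<Rightarrow> real)"

definition allC :: "nat \<Rightarrow> (nat \<Rightarrow> constr set) \<Rightarrow> constr set" where
  "allC V Cs = (\<Union>t\<in>{1..V}. Cs t)"

definition obj :: "nat \<Rightarrow> nat \<Rightarrow> constr set \<Rightarrow> real \<Rightarrow> nat \<Rightarrow> (nat \<Rightarrow> nat)
     \<Rightarrow> (nat \<Rightarrow> nat \<Rightarrow> real) \<Rightarrow> (nat set \<Rightarrow> (nat \<Rightarrow> nat) \<Rightarrow> 'v::real_inner) \<Rightarrow> real" where
  "obj V \<kappa> C lam t y \<epsilon> U =
     2 * (\<Sum>j\<in>{t+1..V}. \<Sum>k\<in>{1..\<kappa>}. \<epsilon> j k * (norm (U {j} (sg j k)))\<^sup>2)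
     + (\<Sum>s\<in>{1..t}. (norm (U {s} (sg s (y s))))\<^sup>2)
     - lam * (\<Sum>cc\<in>C. \<Sum>\<alpha>\<in>asg (fst cc) \<kappa>. snd cc \<alpha> * (norm (U (fst cc) \<alpha>))\<^sup>2)"

text \<open>The relaxation Rel(G | y_{1:t}); the expectation over independent Rademacher
  signs is the uniform average over all sign patterns.\<close>
definition Rel :: "(nat set \<Rightarrow> (nat \<Rightarrow> nat) \<Rightarrow> 'v::real_inner) set \<Rightarrow> nat \<Rightarrow> nat \<Rightarrow> constr set
     \<Rightarrow> real \<Rightarrow> real \<Rightarrow> nat \<Rightarrow> (nat \<Rightarrow> nat) \<Rightarrow> real" where
  "Rel Las V \<kappa> C lam K t y =
     (\<Sum>\<epsilon>\<in>signs V \<kappa> t. (SUP U\<in>Las. obj V \<kappa> C lam t y \<epsilon> U)) / real (card (signs V \<kappa> t))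
     - real t + lam * K"

definition LK :: "('x \<Rightarrow> nat) set \<Rightarrow> (nat \<Rightarrow> 'x) \<Rightarrow> constr set \<Rightarrow> real \<Rightarrow> ('x \<Rightarrow> nat) set" where
  "LK L x C K = {f\<in>L. (\<Sum>cc\<in>C. snd cc (restrict (\<lambda>t. f (x t)) (fst cc))) \<le> K}"

definition distr_on :: "nat \<Rightarrow> (nat \<Rightarrow> real) set" where
  "distr_on \<kappa> = {q. (\<forall>i\<in>{1..\<kappa>}. 0 \<le> q i) \<and> (\<Sum>i\<in>{1..\<kappa>}. q i) = 1}"

text \<open>Admissibility of relaxation Rel (Rel t y depends on y_{1..t}).
  Condition (i): Rel(y_{1:V}) \<ge> -inf_f loss = sup_f (-loss), written pointwise.\<close>
definition admissible :: "nat \<Rightarrow> nat \<Rightarrow> ('x \<Rightarrow> nat) set \<Rightarrow> (nat \<Rightarrow> 'x)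
     \<Rightarrow> (nat \<Rightarrow> (nat \<Rightarrow> nat) \<Rightarrow> real) \<Rightarrow> bool" where
  "admissible V \<kappa> G x R \<longleftrightarrow>
     (\<forall>y. (\<forall>s\<in>{1..V}. y s \<in> {1..\<kappa>}) \<longrightarrow>
        (\<forall>f\<in>G. - (\<Sum>t\<in>{1..V}. loss (f (x t)) (y t)) \<le> R V y)) \<and>
     (\<forall>t\<in>{1..V}. \<forall>y. (\<forall>s\<in>{1..<t}. y s \<in> {1..\<kappa>}) \<longrightarrow>
        (INF q\<in>distr_on \<kappa>. Max ((\<lambda>yt. (\<Sum>i\<in>{1..\<kappa>}. q i * loss i yt) + R t (y(t := yt))) ` {1..\<kappa>}))
          \<le> R (t - 1) y)"

end

theory Submission
  imports Defs
begin

text \<open>Fix a round \<open>t\<close> and the later signs \<open>\<epsilon>\<close>. A Lasserre family \<open>U\<close> enters the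
  objective through \<open>A(U) + \<langle>w, a(U)\<rangle>\<close>, where \<open>a(U) = (\<parallel>U {t} k\<parallel>\<^sup>2)\<close> is a probability
  vector on the labels: revealing the label \<open>y\<close> contributes \<open>w = e y\<close>, a fresh Rademacher
  vector \<open>\<sigma>\<close> contributes \<open>w = 2\<sigma>\<close>. The supremum \<open>S(w)\<close> over the Lasserre set is convex in
  \<open>w\<close>, so symmetrising over sign flips gives \<open>S(e y - e k) + S(e k - e y) \<le> 2 E\<^sub>\<sigma> S(2\<sigma>) = 2R\<close>.
  Summing these pair bounds over a set \<open>T\<close> of labels yields \<open>\<Sum>y\<in>T. S(e y) - R \<le> 1\<close>, which is
  exactly what is needed for a distribution \<open>q\<close> with \<open>S(e y) - q y \<le> R\<close> for every label.
  Averaging over \<open>\<epsilon>\<close> gives the admissibility inequality; the final condition follows by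
  evaluating the supremum at the integral solution of a labelling in \<open>L\<^sub>K\<close>.\<close>

definition sign_vectors :: "nat \<Rightarrow> (nat \<Rightarrow> real) set" where
  "sign_vectors \<kappa> = PiE {1..\<kappa>} (\<lambda>_. {-1, 1})"

definition flip_signs :: "nat set \<Rightarrow> (nat \<Rightarrow> real) \<Rightarrow> nat \<Rightarrow> real" where
  "flip_signs J \<sigma> = (\<lambda>i. if i \<in> J then - \<sigma> i else \<sigma> i)"

lemma finite_sign_vectors: "finite (sign_vectors \<kappa>)"
  unfolding sign_vectors_def by (intro finite_PiE) auto

lemma card_sign_vectors_pos: "0 < card (sign_vectors \<kappa>)"
  unfolding sign_vectors_def by (simp add: card_PiE)

lemma sign_vectors_values: "\<sigma> \<in> sign_vectors \<kappa> \<Longrightarrow> k \<in> {1..\<kappa>} \<Longrightarrow> \<sigma> k \<in> {-1, 1}"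
  unfolding sign_vectors_def by auto

lemma flip_signs_in_sign_vectors:
  "J \<subseteq> {1..\<kappa>} \<Longrightarrow> \<sigma> \<in> sign_vectors \<kappa> \<Longrightarrow> flip_signs J \<sigma> \<in> sign_vectors \<kappa>"
  unfolding sign_vectors_def flip_signs_def by (auto simp: PiE_iff extensional_def)

lemma flip_signs_flip_signs [simp]: "flip_signs J (flip_signs J \<sigma>) = \<sigma>"
  unfolding flip_signs_def by auto

lemma sum_sign_vectors_flip:
  assumes "J \<subseteq> {1..\<kappa>}"
  shows "(\<Sum>\<sigma>\<in>sign_vectors \<kappa>. g (flip_signs J \<sigma>)) = (\<Sum>\<sigma>\<in>sign_vectors \<kappa>. g \<sigma>)"
  by (rule sum.reindex_bij_witness[of _ "flip_signs J" "flip_signs J"])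
    (auto simp: flip_signs_in_sign_vectors[OF assms])

lemma exists_distr_excess_le:
  fixes \<Phi> :: "nat \<Rightarrow> real"
  assumes "1 \<le> \<kappa>" and excess: "\<And>T. T \<subseteq> {1..\<kappa>} \<Longrightarrow> (\<Sum>y\<in>T. \<Phi> y - R) \<le> 1"
  shows "\<exists>q\<in>distr_on \<kappa>. \<forall>y\<in>{1..\<kappa>}. \<Phi> y - q y \<le> R"
proof -
  define e where "e y = max 0 (\<Phi> y - R)" for y
  have "(\<Sum>y\<in>{1..\<kappa>}. e y) = (\<Sum>y\<in>{y \<in> {1..\<kappa>}. R < \<Phi> y}. \<Phi> y - R)"
    unfolding e_def sum.inter_filter[OF finite_atLeastAtMost] by (rule sum.cong) auto
  also have "\<dots> \<le> 1" by (rule excess) auto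
  finally have e_sum: "(\<Sum>y\<in>{1..\<kappa>}. e y) \<le> 1" .
  define q where "q y = e y + (if y = 1 then 1 - (\<Sum>z\<in>{1..\<kappa>}. e z) else 0)" for y
  have "q \<in> distr_on \<kappa>"
    using e_sum \<open>1 \<le> \<kappa>\<close> by (auto simp: distr_on_def q_def e_def sum.distrib)
  moreover have "\<Phi> y - q y \<le> R" for y
    using e_sum by (auto simp: q_def e_def)
  ultimately show ?thesis by blast
qed

lemma sum_pairs_le_of_pair_bound:
  fixes G :: "'a \<Rightarrow> 'a \<Rightarrow> real"
  assumes "\<And>y k. y \<in> T \<Longrightarrow> k \<in> T \<Longrightarrow> G y k + G k y \<le> 2 * R"
  shows "(\<Sum>y\<in>T. \<Sum>k\<in>T. G y k) \<le> real (card T) * real (card T) * R"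
proof -
  have "2 * (\<Sum>y\<in>T. \<Sum>k\<in>T. G y k) = (\<Sum>y\<in>T. \<Sum>k\<in>T. G y k + G k y)"
    using sum.swap[of "\<lambda>y k. G k y" T T] by (simp add: sum.distrib)
  also have "\<dots> \<le> (\<Sum>y\<in>T. \<Sum>k\<in>T. 2 * R)" by (intro sum_mono assms)
  finally show ?thesis by simp
qed


locale simplex_family =
  fixes X :: "'u set" and A :: "'u \<Rightarrow> real" and a :: "'u \<Rightarrow> nat \<Rightarrow> real" and \<kappa> :: nat
  assumes nonempty: "X \<noteq> {}" and bdd_A: "bdd_above (A ` X)"
    and a_nonneg: "\<And>u k. u \<in> X \<Longrightarrow> k \<in> {1..\<kappa>} \<Longrightarrow> 0 \<le> a u k"
    and a_sum: "\<And>u. u \<in> X \<Longrightarrow> (\<Sum>k\<in>{1..\<kappa>}. a u k) = 1"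
begin

definition sup_affine :: "(nat \<Rightarrow> real) \<Rightarrow> real" where
  "sup_affine w = (SUP u\<in>X. A u + (\<Sum>k\<in>{1..\<kappa>}. w k * a u k))"

definition rademacher_bound :: real where
  "rademacher_bound = (\<Sum>\<sigma>\<in>sign_vectors \<kappa>. sup_affine (\<lambda>k. 2 * \<sigma> k)) / card (sign_vectors \<kappa>)"

lemma kappa_pos: "1 \<le> \<kappa>"
  using nonempty a_sum by (cases \<kappa>) auto

lemma a_le_1: "u \<in> X \<Longrightarrow> k \<in> {1..\<kappa>} \<Longrightarrow> a u k \<le> 1"
  using member_le_sum[of k "{1..\<kappa>}" "a u"] a_nonneg a_sum by auto

lemma sum_coord: "y \<in> {1..\<kappa>} \<Longrightarrow> (\<Sum>k\<in>{1..\<kappa>}. of_bool (k = y) * a u k) = a u y"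
  by (simp add: if_distrib if_distribR cong: if_cong)

lemma sup_affine_upper:
  assumes u: "u \<in> X"
  shows "A u + (\<Sum>k\<in>{1..\<kappa>}. w k * a u k) \<le> sup_affine w"
proof -
  obtain M where M: "\<And>v. v \<in> X \<Longrightarrow> A v \<le> M" using bdd_A by (auto simp: bdd_above_def)
  have "(\<Sum>k\<in>{1..\<kappa>}. w k * a v k) \<le> (\<Sum>k\<in>{1..\<kappa>}. \<bar>w k\<bar>)" if "v \<in> X" for v
  proof (rule sum_mono)
    fix k assume k: "k \<in> {1..\<kappa>}"
    have "w k * a v k \<le> \<bar>w k\<bar> * a v k" using a_nonneg[OF that k] by (simp add: mult_right_mono)
    also have "\<dots> \<le> \<bar>w k\<bar>" using a_le_1[OF that k] by (simp add: mult_left_le)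
    finally show "w k * a v k \<le> \<bar>w k\<bar>" .
  qed
  then have "bdd_above ((\<lambda>v. A v + (\<Sum>k\<in>{1..\<kappa>}. w k * a v k)) ` X)"
    by (intro bdd_aboveI2[where M = "M + (\<Sum>k\<in>{1..\<kappa>}. \<bar>w k\<bar>)"]) (simp add: M add_mono)
  then show ?thesis unfolding sup_affine_def by (rule cSUP_upper[OF u])
qed

lemma sup_affine_least:
  "(\<And>u. u \<in> X \<Longrightarrow> A u + (\<Sum>k\<in>{1..\<kappa>}. w k * a u k) \<le> b) \<Longrightarrow> sup_affine w \<le> b"
  unfolding sup_affine_def by (rule cSUP_least[OF nonempty])

lemma sup_affine_cong: "(\<And>k. k \<in> {1..\<kappa>} \<Longrightarrow> w k = w' k) \<Longrightarrow> sup_affine w = sup_affine w'"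
  unfolding sup_affine_def by (intro SUP_cong refl arg_cong2[where f = "(+)"] sum.cong) auto

lemma sup_affine_midpoint:
  assumes "\<And>k. k \<in> {1..\<kappa>} \<Longrightarrow> w k = (w1 k + w2 k) / 2"
  shows "sup_affine w \<le> (sup_affine w1 + sup_affine w2) / 2"
proof (rule sup_affine_least)
  fix u assume u: "u \<in> X"
  have "(\<Sum>k\<in>{1..\<kappa>}. w k * a u k)
      = ((\<Sum>k\<in>{1..\<kappa>}. w1 k * a u k) + (\<Sum>k\<in>{1..\<kappa>}. w2 k * a u k)) / 2"
  proof -
    have "(\<Sum>k\<in>{1..\<kappa>}. w k * a u k) = (\<Sum>k\<in>{1..\<kappa>}. (w1 k * a u k + w2 k * a u k) / 2)"
      using assms by (intro sum.cong) (auto simp: distrib_right[symmetric])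
    then show ?thesis by (simp add: sum.distrib sum_divide_distrib[symmetric])
  qed
  then show "A u + (\<Sum>k\<in>{1..\<kappa>}. w k * a u k) \<le> (sup_affine w1 + sup_affine w2) / 2"
    using sup_affine_upper[OF u, of w1] sup_affine_upper[OF u, of w2] by simp
qed

text \<open>Flipping the signs outside \<open>J\<close> is measure preserving, and the restricted weight vector
  is the midpoint of \<open>2\<sigma>\<close> and its flip.\<close>
lemma sum_sup_affine_restrict_le:
  assumes "J \<subseteq> {1..\<kappa>}"
  shows "(\<Sum>\<sigma>\<in>sign_vectors \<kappa>. sup_affine (\<lambda>k. if k \<in> J then 2 * \<sigma> k else 0))
    \<le> (\<Sum>\<sigma>\<in>sign_vectors \<kappa>. sup_affine (\<lambda>k. 2 * \<sigma> k))"
proof -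
  let ?F = "\<lambda>\<sigma>. sup_affine (\<lambda>k. 2 * \<sigma> k)" and ?\<iota> = "flip_signs ({1..\<kappa>} - J)"
  have "(\<Sum>\<sigma>\<in>sign_vectors \<kappa>. sup_affine (\<lambda>k. if k \<in> J then 2 * \<sigma> k else 0))
      \<le> (\<Sum>\<sigma>\<in>sign_vectors \<kappa>. (?F \<sigma> + ?F (?\<iota> \<sigma>)) / 2)"
    by (intro sum_mono sup_affine_midpoint) (auto simp: flip_signs_def)
  also have "\<dots> = ((\<Sum>\<sigma>\<in>sign_vectors \<kappa>. ?F \<sigma>) + (\<Sum>\<sigma>\<in>sign_vectors \<kappa>. ?F (?\<iota> \<sigma>))) / 2"
    by (simp add: sum.distrib sum_divide_distrib[symmetric])
  also have "(\<Sum>\<sigma>\<in>sign_vectors \<kappa>. ?F (?\<iota> \<sigma>)) = (\<Sum>\<sigma>\<in>sign_vectors \<kappa>. ?F \<sigma>)"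
    by (rule sum_sign_vectors_flip) auto
  finally show ?thesis by simp
qed

lemma sup_affine_zero_le: "sup_affine (\<lambda>_. 0) \<le> rademacher_bound"
proof -
  have "real (card (sign_vectors \<kappa>)) * sup_affine (\<lambda>_. 0)
      \<le> (\<Sum>\<sigma>\<in>sign_vectors \<kappa>. sup_affine (\<lambda>k. 2 * \<sigma> k))"
    using sum_sup_affine_restrict_le[of "{}"] by simp
  then show ?thesis
    unfolding rademacher_bound_def using card_sign_vectors_pos[of \<kappa>] by (simp add: field_simps)
qed

lemma sup_affine_pair_le:
  assumes y: "y \<in> {1..\<kappa>}" and k: "k \<in> {1..\<kappa>}"
  shows "sup_affine (\<lambda>j. of_bool (j = y) - of_bool (j = k))
       + sup_affine (\<lambda>j. of_bool (j = k) - of_bool (j = y)) \<le> 2 * rademacher_bound"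
proof (cases "y = k")
  case True
  then show ?thesis using sup_affine_zero_le by simp
next
  case False
  define W where "W p q = sup_affine (\<lambda>j. if j = y then 2 * p else if j = k then 2 * q else 0)"
    for p q :: real
  define G1 where "G1 = sup_affine (\<lambda>j. of_bool (j = y) - of_bool (j = k))"
  define G2 where "G2 = sup_affine (\<lambda>j. of_bool (j = k) - of_bool (j = y))"
  define Z where "Z = sup_affine (\<lambda>_. 0)"
  have "G1 \<le> (W 1 (-1) + Z) / 2" "G2 \<le> (W (-1) 1 + Z) / 2" "Z \<le> (W 1 1 + W (-1) (-1)) / 2"
    unfolding W_def G1_def G2_def Z_def by (rule sup_affine_midpoint; use False in auto)+
  then have corners: "2 * (G1 + G2) \<le> W 1 1 + W 1 (-1) + W (-1) 1 + W (-1) (-1)"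
    by (simp add: field_simps)
  let ?P = "\<lambda>\<sigma>. W (\<sigma> y) (\<sigma> k)"
  have flips: "(\<Sum>\<sigma>\<in>sign_vectors \<kappa>. ?P (flip_signs J \<sigma>)) = (\<Sum>\<sigma>\<in>sign_vectors \<kappa>. ?P \<sigma>)"
    if "J \<subseteq> {y, k}" for J
    using that y k by (intro sum_sign_vectors_flip) auto
  \<comment> \<open>Each \<open>\<sigma>\<close> together with its flips at \<open>y\<close>, at \<open>k\<close> and at both runs through all four corners.\<close>
  have "(\<Sum>\<sigma>\<in>sign_vectors \<kappa>. ?P \<sigma> + ?P (flip_signs {y} \<sigma>) + ?P (flip_signs {k} \<sigma>)
          + ?P (flip_signs {y, k} \<sigma>))
      = (\<Sum>\<sigma>\<in>sign_vectors \<kappa>. W 1 1 + W 1 (-1) + W (-1) 1 + W (-1) (-1))"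
  proof (rule sum.cong)
    fix \<sigma> assume "\<sigma> \<in> sign_vectors \<kappa>"
    then have "\<sigma> y \<in> {-1, 1}" "\<sigma> k \<in> {-1, 1}" using y k by (auto dest: sign_vectors_values)
    then show "?P \<sigma> + ?P (flip_signs {y} \<sigma>) + ?P (flip_signs {k} \<sigma>) + ?P (flip_signs {y, k} \<sigma>)
        = W 1 1 + W 1 (-1) + W (-1) 1 + W (-1) (-1)"
      using False by (auto simp: flip_signs_def)
  qed simp
  then have "real (card (sign_vectors \<kappa>)) * (W 1 1 + W 1 (-1) + W (-1) 1 + W (-1) (-1))
      = 4 * (\<Sum>\<sigma>\<in>sign_vectors \<kappa>. ?P \<sigma>)"
    by (simp add: sum.distrib flips)
  also have "(\<Sum>\<sigma>\<in>sign_vectors \<kappa>. ?P \<sigma>)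
      = (\<Sum>\<sigma>\<in>sign_vectors \<kappa>. sup_affine (\<lambda>j. if j \<in> {y, k} then 2 * \<sigma> j else 0))"
    unfolding W_def by (intro sum.cong refl sup_affine_cong) auto
  also have "\<dots> \<le> real (card (sign_vectors \<kappa>)) * rademacher_bound"
    using sum_sup_affine_restrict_le[of "{y, k}"] y k card_sign_vectors_pos[of \<kappa>]
    by (simp add: rademacher_bound_def)
  finally have "W 1 1 + W 1 (-1) + W (-1) 1 + W (-1) (-1) \<le> 4 * rademacher_bound"
    using card_sign_vectors_pos[of \<kappa>] by (simp add: mult_le_cancel_left_pos)
  with corners have "G1 + G2 \<le> 2 * rademacher_bound" by (simp add: field_simps)
  then show ?thesis unfolding G1_def G2_def .
qed

lemma card_mult_sup_affine_coord_le:
  assumes T: "T \<subseteq> {1..\<kappa>}" and yT: "y \<in> T"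
  shows "real (card T) * sup_affine (\<lambda>k. of_bool (k = y))
    \<le> 1 + (\<Sum>k\<in>T. sup_affine (\<lambda>j. of_bool (j = y) - of_bool (j = k)))"
proof -
  define m where "m = real (card T)"
  have m_pos: "0 < m" using T yT finite_subset[OF T] by (auto simp: m_def card_gt_0_iff)
  have y: "y \<in> {1..\<kappa>}" using yT T by auto
  let ?G = "\<lambda>k. sup_affine (\<lambda>j. of_bool (j = y) - of_bool (j = k))"
  have "sup_affine (\<lambda>k. of_bool (k = y)) \<le> (1 + (\<Sum>k\<in>T. ?G k)) / m"
  proof (rule sup_affine_least)
    fix u assume u: "u \<in> X"
    have "(\<Sum>k\<in>T. A u + (a u y - a u k)) \<le> (\<Sum>k\<in>T. ?G k)"
    proof (rule sum_mono)
      fix k assume "k \<in> T"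
      then have "(\<Sum>j\<in>{1..\<kappa>}. (of_bool (j = y) - of_bool (j = k)) * a u j) = a u y - a u k"
        using y T by (simp only: left_diff_distrib sum_subtractf sum_coord subsetD)
      then show "A u + (a u y - a u k) \<le> ?G k" using sup_affine_upper[OF u] by metis
    qed
    moreover have "(\<Sum>k\<in>T. a u k) \<le> (\<Sum>k\<in>{1..\<kappa>}. a u k)"
      using T a_nonneg[OF u] by (intro sum_mono2) auto
    ultimately have "m * (A u + a u y) \<le> 1 + (\<Sum>k\<in>T. ?G k)"
      using a_sum[OF u] by (simp add: sum_subtractf sum.distrib m_def algebra_simps)
    then show "A u + (\<Sum>k\<in>{1..\<kappa>}. of_bool (k = y) * a u k) \<le> (1 + (\<Sum>k\<in>T. ?G k)) / m"
      using m_pos by (simp only: sum_coord[OF y]) (simp add: field_simps)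
  qed
  then show ?thesis using m_pos by (simp add: m_def field_simps)
qed

lemma sum_sup_affine_coord_le:
  assumes T: "T \<subseteq> {1..\<kappa>}"
  shows "(\<Sum>y\<in>T. sup_affine (\<lambda>k. of_bool (k = y)) - rademacher_bound) \<le> 1"
proof (cases "T = {}")
  case True
  then show ?thesis by simp
next
  case False
  define m where "m = real (card T)"
  have m_pos: "0 < m" using False finite_subset[OF T] by (simp add: m_def card_gt_0_iff)
  define G where "G y k = sup_affine (\<lambda>j. of_bool (j = y) - of_bool (j = k))" for y k
  have "m * (\<Sum>y\<in>T. sup_affine (\<lambda>k. of_bool (k = y))) \<le> (\<Sum>y\<in>T. 1 + (\<Sum>k\<in>T. G y k))"
    unfolding sum_distrib_left m_def G_def
    by (intro sum_mono card_mult_sup_affine_coord_le[OF T])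
  also have "\<dots> \<le> m * (1 + m * rademacher_bound)"
  proof -
    have "(\<Sum>y\<in>T. \<Sum>k\<in>T. G y k) \<le> m * m * rademacher_bound"
      unfolding m_def by (rule sum_pairs_le_of_pair_bound)
        (use T in \<open>auto simp: G_def intro!: sup_affine_pair_le\<close>)
    then show ?thesis by (simp add: sum.distrib m_def algebra_simps)
  qed
  finally have "(\<Sum>y\<in>T. sup_affine (\<lambda>k. of_bool (k = y))) \<le> 1 + m * rademacher_bound"
    using m_pos by (simp add: mult_le_cancel_left_pos)
  then show ?thesis by (simp add: sum_subtractf m_def)
qed

lemma exists_distr_gap_le:
  "\<exists>q\<in>distr_on \<kappa>. \<forall>y\<in>{1..\<kappa>}. sup_affine (\<lambda>k. of_bool (k = y)) - q y \<le> rademacher_bound"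
  using exists_distr_excess_le[OF kappa_pos sum_sup_affine_coord_le] .

end

definition marginal :: "(nat set \<Rightarrow> (nat \<Rightarrow> nat) \<Rightarrow> 'v::real_inner) \<Rightarrow> nat \<Rightarrow> nat \<Rightarrow> real" where
  "marginal U j k = (norm (U {j} (sg j k)))\<^sup>2"

definition penalty :: "nat \<Rightarrow> constr set \<Rightarrow> (nat set \<Rightarrow> (nat \<Rightarrow> nat) \<Rightarrow> 'v::real_inner) \<Rightarrow> real" where
  "penalty \<kappa> C U = (\<Sum>cc\<in>C. \<Sum>\<alpha>\<in>asg (fst cc) \<kappa>. snd cc \<alpha> * (norm (U (fst cc) \<alpha>))\<^sup>2)"

definition obj_rest :: "nat \<Rightarrow> nat \<Rightarrow> constr set \<Rightarrow> real \<Rightarrow> nat \<Rightarrow> (nat \<Rightarrow> nat)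
     \<Rightarrow> (nat \<Rightarrow> nat \<Rightarrow> real) \<Rightarrow> (nat set \<Rightarrow> (nat \<Rightarrow> nat) \<Rightarrow> 'v::real_inner) \<Rightarrow> real" where
  "obj_rest V \<kappa> C lam t y \<epsilon> U = 2 * (\<Sum>j\<in>{t+1..V}. \<Sum>k\<in>{1..\<kappa>}. \<epsilon> j k * marginal U j k)
     + (\<Sum>s\<in>{1..<t}. marginal U s (y s)) - lam * penalty \<kappa> C U"

lemma obj_label_update:
  assumes "1 \<le> t"
  shows "obj V \<kappa> C lam t (y(t := yt)) \<epsilon> U = obj_rest V \<kappa> C lam t y \<epsilon> U + marginal U t yt"
proof -
  have "{1..t} = insert t {1..<t}" using assms by auto
  then have "(\<Sum>s\<in>{1..t}. (norm (U {s} (sg s ((y(t := yt)) s))))\<^sup>2)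
      = marginal U t yt + (\<Sum>s\<in>{1..<t}. marginal U s (y s))"
    by (simp add: marginal_def)
  then show ?thesis unfolding obj_def obj_rest_def penalty_def marginal_def by simp
qed

lemma obj_sign_update:
  assumes "1 \<le> t" "t \<le> V"
  shows "obj V \<kappa> C lam (t - 1) y (\<epsilon>(t := \<sigma>)) U
     = obj_rest V \<kappa> C lam t y \<epsilon> U + 2 * (\<Sum>k\<in>{1..\<kappa>}. \<sigma> k * marginal U t k)"
proof -
  have "{t - 1 + 1..V} = insert t {t+1..V}" and "{1..t-1} = {1..<t}" using assms by auto
  then show ?thesis
    unfolding obj_def obj_rest_def penalty_def marginal_def by (simp add: algebra_simps)
qed

lemma lasserre_marginal_sum:
  "U \<in> lasserre V \<kappa> r d B c \<Longrightarrow> i \<in> {1..V} \<Longrightarrow> (\<Sum>k\<in>{1..\<kappa>}. marginal U i k) = 1"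
  unfolding lasserre_def marginal_def by auto

lemma lasserre_marginal_le_1:
  assumes "U \<in> lasserre V \<kappa> r d B c" "i \<in> {1..V}" "k \<in> {1..\<kappa>}"
  shows "marginal U i k \<le> 1"
  using member_le_sum[of k "{1..\<kappa>}" "marginal U i"] lasserre_marginal_sum[OF assms(1,2)] assms(3)
  by (auto simp: marginal_def)

lemma penalty_nonneg:
  "\<forall>cc\<in>C. \<forall>\<alpha>\<in>asg (fst cc) \<kappa>. 0 \<le> snd cc \<alpha> \<Longrightarrow> 0 \<le> penalty \<kappa> C U"
  unfolding penalty_def by (intro sum_nonneg) auto

lemma obj_rest_le:
  assumes U: "U \<in> lasserre V \<kappa> r d B c" and \<epsilon>: "\<epsilon> \<in> signs V \<kappa> t"
    and lam: "0 \<le> lam" and C_nonneg: "\<forall>cc\<in>C. \<forall>\<alpha>\<in>asg (fst cc) \<kappa>. 0 \<le> snd cc \<alpha>"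
    and y: "\<forall>s\<in>{1..<t}. y s \<in> {1..\<kappa>}" and tV: "t \<le> V"
  shows "obj_rest V \<kappa> C lam t y \<epsilon> U \<le> 2 * real (card {t+1..V}) + real (card {1..<t})"
proof -
  have "(\<Sum>k\<in>{1..\<kappa>}. \<epsilon> j k * marginal U j k) \<le> 1" if j: "j \<in> {t+1..V}" for j
  proof -
    have "(\<Sum>k\<in>{1..\<kappa>}. \<epsilon> j k * marginal U j k) \<le> (\<Sum>k\<in>{1..\<kappa>}. marginal U j k)"
    proof (rule sum_mono)
      fix k assume k: "k \<in> {1..\<kappa>}"
      have "\<epsilon> j k \<in> {-1, 1}" using \<epsilon> j k by (auto simp: signs_def PiE_iff)
      then show "\<epsilon> j k * marginal U j k \<le> marginal U j k" by (auto simp: marginal_def)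
    qed
    also have "\<dots> = 1" using lasserre_marginal_sum[OF U] j by auto
    finally show ?thesis .
  qed
  then have "(\<Sum>j\<in>{t+1..V}. \<Sum>k\<in>{1..\<kappa>}. \<epsilon> j k * marginal U j k) \<le> (\<Sum>j\<in>{t+1..V}. 1)"
    by (rule sum_mono)
  moreover have "(\<Sum>s\<in>{1..<t}. marginal U s (y s)) \<le> (\<Sum>s\<in>{1..<t}. 1)"
    by (rule sum_mono) (use lasserre_marginal_le_1[OF U] y tV in auto)
  moreover have "0 \<le> lam * penalty \<kappa> C U" using lam penalty_nonneg[OF C_nonneg, where U = U] by simp
  ultimately show ?thesis unfolding obj_rest_def by simp
qed

lemma signs_eq: "signs V \<kappa> t = PiE {t+1..V} (\<lambda>_. sign_vectors \<kappa>)"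
  unfolding signs_def sign_vectors_def ..

lemma card_signs_pos: "0 < card (signs V \<kappa> t)"
  unfolding signs_eq using finite_sign_vectors card_sign_vectors_pos
  by (simp add: card_PiE prod_pos)

lemma signs_prev_round:
  assumes "1 \<le> t" "t \<le> V"
  shows sum_signs_prev_round: "(\<Sum>e\<in>signs V \<kappa> (t - 1). g e)
      = (\<Sum>\<epsilon>\<in>signs V \<kappa> t. \<Sum>\<sigma>\<in>sign_vectors \<kappa>. g (\<epsilon>(t := \<sigma>)))"
    and card_signs_prev_round:
      "card (signs V \<kappa> (t - 1)) = card (signs V \<kappa> t) * card (sign_vectors \<kappa>)"
proof -
  have "{t - 1 + 1..V} = insert t {t+1..V}" using assms by auto
  then have eq: "signs V \<kappa> (t - 1) = (\<lambda>(\<sigma>, \<epsilon>). \<epsilon>(t := \<sigma>)) ` (sign_vectors \<kappa> \<times> signs V \<kappa> t)"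
    unfolding signs_eq by (simp add: PiE_insert_eq)
  have inj: "inj_on (\<lambda>(\<sigma>, \<epsilon>). \<epsilon>(t := \<sigma>)) (sign_vectors \<kappa> \<times> signs V \<kappa> t)"
    unfolding signs_eq by (rule inj_combinator) simp
  have "(\<Sum>e\<in>signs V \<kappa> (t - 1). g e) = (\<Sum>(\<sigma>, \<epsilon>)\<in>sign_vectors \<kappa> \<times> signs V \<kappa> t. g (\<epsilon>(t := \<sigma>)))"
    unfolding eq by (subst sum.reindex[OF inj]) (simp add: case_prod_unfold)
  also have "\<dots> = (\<Sum>\<epsilon>\<in>signs V \<kappa> t. \<Sum>\<sigma>\<in>sign_vectors \<kappa>. g (\<epsilon>(t := \<sigma>)))"
    by (simp add: sum.cartesian_product[symmetric] sum.swap[of _ "sign_vectors \<kappa>"])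
  finally show "(\<Sum>e\<in>signs V \<kappa> (t - 1). g e)
      = (\<Sum>\<epsilon>\<in>signs V \<kappa> t. \<Sum>\<sigma>\<in>sign_vectors \<kappa>. g (\<epsilon>(t := \<sigma>)))" .
  show "card (signs V \<kappa> (t - 1)) = card (signs V \<kappa> t) * card (sign_vectors \<kappa>)"
    unfolding eq card_image[OF inj] card_cartesian_product by simp
qed

lemma exists_round_distr:
  fixes Las :: "(nat set \<Rightarrow> (nat \<Rightarrow> nat) \<Rightarrow> 'v::real_inner) set"
  assumes Las: "Las \<subseteq> lasserre V \<kappa> r d B c" and \<kappa>: "1 \<le> \<kappa>" and lam: "0 \<le> lam"
    and C_nonneg: "\<forall>cc\<in>C. \<forall>\<alpha>\<in>asg (fst cc) \<kappa>. 0 \<le> snd cc \<alpha>"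
    and y: "\<forall>s\<in>{1..<t}. y s \<in> {1..\<kappa>}" and t: "t \<in> {1..V}" and \<epsilon>: "\<epsilon> \<in> signs V \<kappa> t"
  shows "\<exists>q\<in>distr_on \<kappa>. \<forall>yt\<in>{1..\<kappa>}.
     (SUP U\<in>Las. obj V \<kappa> C lam t (y(t := yt)) \<epsilon> U) - q yt
     \<le> (\<Sum>\<sigma>\<in>sign_vectors \<kappa>. SUP U\<in>Las. obj V \<kappa> C lam (t - 1) y (\<epsilon>(t := \<sigma>)) U)
        / card (sign_vectors \<kappa>)"
proof (cases "Las = {}")
  case True
  \<comment> \<open>Both sides then involve only the junk value \<open>Sup {}\<close>.\<close>
  have "(\<lambda>i. of_bool (i = 1)) \<in> distr_on \<kappa>" using \<kappa> by (simp add: distr_on_def)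
  then show ?thesis using True card_sign_vectors_pos[of \<kappa>] by (intro bexI) auto
next
  case False
  have t1: "1 \<le> t" and tV: "t \<le> V" using t by auto
  interpret simplex_family Las "obj_rest V \<kappa> C lam t y \<epsilon>" "\<lambda>U k. marginal U t k" \<kappa>
  proof
    show "bdd_above (obj_rest V \<kappa> C lam t y \<epsilon> ` Las)"
      using obj_rest_le[OF _ \<epsilon> lam C_nonneg y tV] Las by (intro bdd_aboveI2) blast
    show "U \<in> Las \<Longrightarrow> (\<Sum>k\<in>{1..\<kappa>}. marginal U t k) = 1" for U
      using lasserre_marginal_sum[of U V \<kappa> r d B c t] Las t by blast
  qed (use False in \<open>auto simp: marginal_def\<close>)
  have "sup_affine (\<lambda>k. of_bool (k = yt)) = (SUP U\<in>Las. obj V \<kappa> C lam t (y(t := yt)) \<epsilon> U)"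
    if "yt \<in> {1..\<kappa>}" for yt
    unfolding sup_affine_def obj_label_update[OF t1] using that by (simp add: sum_coord)
  moreover have "sup_affine (\<lambda>k. 2 * \<sigma> k) = (SUP U\<in>Las. obj V \<kappa> C lam (t - 1) y (\<epsilon>(t := \<sigma>)) U)"
    for \<sigma>
    unfolding sup_affine_def obj_sign_update[OF t1 tV]
    by (simp add: sum_distrib_left mult.assoc)
  ultimately show ?thesis using exists_distr_gap_le unfolding rademacher_bound_def by simp
qed

lemma expected_loss:
  assumes "q \<in> distr_on \<kappa>" "yt \<in> {1..\<kappa>}"
  shows "(\<Sum>i\<in>{1..\<kappa>}. q i * loss i yt) = 1 - q yt"
proof -
  have "(\<Sum>i\<in>{1..\<kappa>}. q i * loss i yt) = (\<Sum>i\<in>{1..\<kappa>}. q i - (if i = yt then q yt else 0))"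
    by (rule sum.cong) (auto simp: loss_def)
  then show ?thesis using assms by (simp add: sum_subtractf distr_on_def)
qed

lemma distr_on_average:
  assumes "finite E" "E \<noteq> {}" "\<And>e. e \<in> E \<Longrightarrow> Q e \<in> distr_on \<kappa>"
  shows "(\<lambda>i. (\<Sum>e\<in>E. Q e i) / card E) \<in> distr_on \<kappa>"
proof -
  have "(\<Sum>i\<in>{1..\<kappa>}. \<Sum>e\<in>E. Q e i) = (\<Sum>e\<in>E. 1)"
    using assms(3) by (subst sum.swap) (simp add: distr_on_def)
  moreover have "0 \<le> (\<Sum>e\<in>E. Q e i)" if "i \<in> {1..\<kappa>}" for i
    using assms(3) that by (intro sum_nonneg) (auto simp: distr_on_def)
  ultimately show ?thesis
    using assms(1,2) by (simp add: distr_on_def sum_divide_distrib[symmetric])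
qed

text \<open>Averaging the per-sign guarantees over \<open>\<epsilon>\<close>, the bound on round \<open>t\<close> telescopes into
  \<open>Rel\<close> at round \<open>t - 1\<close>: the extra \<open>1\<close> is absorbed by the term \<open>- t\<close>.\<close>
lemma rel_step:
  assumes t: "t \<in> {1..V}" and \<kappa>: "1 \<le> \<kappa>"
    and Q: "\<forall>\<epsilon>\<in>signs V \<kappa> t. Q \<epsilon> \<in> distr_on \<kappa> \<and> (\<forall>yt\<in>{1..\<kappa>}.
       (SUP U\<in>Las. obj V \<kappa> C lam t (y(t := yt)) \<epsilon> U) - Q \<epsilon> yt
       \<le> (\<Sum>\<sigma>\<in>sign_vectors \<kappa>. SUP U\<in>Las. obj V \<kappa> C lam (t - 1) y (\<epsilon>(t := \<sigma>)) U)
          / card (sign_vectors \<kappa>))"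
  shows "Max ((\<lambda>yt. (\<Sum>\<epsilon>\<in>signs V \<kappa> t. \<Sum>i\<in>{1..\<kappa>}. Q \<epsilon> i * loss i yt) / real (card (signs V \<kappa> t))
                  + Rel Las V \<kappa> C lam K t (y(t := yt))) ` {1..\<kappa>})
      \<le> Rel Las V \<kappa> C lam K (t - 1) y"
proof -
  have t1: "1 \<le> t" and tV: "t \<le> V" using t by auto
  define N where "N = real (card (signs V \<kappa> t))"
  define Ns where "Ns = real (card (sign_vectors \<kappa>))"
  define R where "R \<epsilon> = (\<Sum>\<sigma>\<in>sign_vectors \<kappa>. SUP U\<in>Las. obj V \<kappa> C lam (t - 1) y (\<epsilon>(t := \<sigma>)) U) / Ns"
    for \<epsilon>
  have N_pos: "0 < N" and Ns_pos: "0 < Ns"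
    unfolding N_def Ns_def using card_signs_pos card_sign_vectors_pos by auto
  have prev: "Rel Las V \<kappa> C lam K (t - 1) y = (\<Sum>\<epsilon>\<in>signs V \<kappa> t. R \<epsilon>) / N - real (t - 1) + lam * K"
    unfolding Rel_def sum_signs_prev_round[OF t1 tV] card_signs_prev_round[OF t1 tV] R_def
    using N_pos Ns_pos by (simp add: N_def Ns_def sum_divide_distrib[symmetric] field_simps)
  have "(\<Sum>\<epsilon>\<in>signs V \<kappa> t. \<Sum>i\<in>{1..\<kappa>}. Q \<epsilon> i * loss i yt) / N + Rel Las V \<kappa> C lam K t (y(t := yt))
      \<le> Rel Las V \<kappa> C lam K (t - 1) y" if yt: "yt \<in> {1..\<kappa>}" for yt
  proof -
    have "(\<Sum>i\<in>{1..\<kappa>}. Q \<epsilon> i * loss i yt) + (SUP U\<in>Las. obj V \<kappa> C lam t (y(t := yt)) \<epsilon> U) \<le> 1 + R \<epsilon>"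
      if "\<epsilon> \<in> signs V \<kappa> t" for \<epsilon>
      using Q that yt expected_loss[of "Q \<epsilon>" \<kappa> yt] unfolding R_def Ns_def by fastforce
    then have "(\<Sum>\<epsilon>\<in>signs V \<kappa> t. (\<Sum>i\<in>{1..\<kappa>}. Q \<epsilon> i * loss i yt)
        + (SUP U\<in>Las. obj V \<kappa> C lam t (y(t := yt)) \<epsilon> U)) / N \<le> (\<Sum>\<epsilon>\<in>signs V \<kappa> t. 1 + R \<epsilon>) / N"
      using N_pos by (intro divide_right_mono sum_mono) auto
    then show ?thesis
      using N_pos t1 unfolding prev by (simp add: Rel_def sum.distrib add_divide_distrib N_def)
  qed
  then show ?thesis using \<kappa> unfolding N_def by (subst Max_le_iff) auto
qed

lemma rel_inf_step:
  fixes Las :: "(nat set \<Rightarrow> (nat \<Rightarrow> nat) \<Rightarrow> 'v::real_inner) set"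
  assumes Las: "Las \<subseteq> lasserre V \<kappa> r d B c" and \<kappa>: "1 \<le> \<kappa>" and lam: "0 \<le> lam"
    and C_nonneg: "\<forall>cc\<in>C. \<forall>\<alpha>\<in>asg (fst cc) \<kappa>. 0 \<le> snd cc \<alpha>"
    and y: "\<forall>s\<in>{1..<t}. y s \<in> {1..\<kappa>}" and t: "t \<in> {1..V}"
  shows "(INF q\<in>distr_on \<kappa>. Max ((\<lambda>yt. (\<Sum>i\<in>{1..\<kappa>}. q i * loss i yt)
            + Rel Las V \<kappa> C lam K t (y(t := yt))) ` {1..\<kappa>}))
      \<le> Rel Las V \<kappa> C lam K (t - 1) y"
proof -
  let ?value = "\<lambda>q. Max ((\<lambda>yt. (\<Sum>i\<in>{1..\<kappa>}. q i * loss i yt)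
      + Rel Las V \<kappa> C lam K t (y(t := yt))) ` {1..\<kappa>})"
  obtain Q where Q: "\<forall>\<epsilon>\<in>signs V \<kappa> t. Q \<epsilon> \<in> distr_on \<kappa> \<and> (\<forall>yt\<in>{1..\<kappa>}.
       (SUP U\<in>Las. obj V \<kappa> C lam t (y(t := yt)) \<epsilon> U) - Q \<epsilon> yt
       \<le> (\<Sum>\<sigma>\<in>sign_vectors \<kappa>. SUP U\<in>Las. obj V \<kappa> C lam (t - 1) y (\<epsilon>(t := \<sigma>)) U)
          / card (sign_vectors \<kappa>))"
    by atomize_elim (rule bchoice, use exists_round_distr[OF Las \<kappa> lam C_nonneg y t] in blast)
  define q where "q i = (\<Sum>\<epsilon>\<in>signs V \<kappa> t. Q \<epsilon> i) / card (signs V \<kappa> t)" for i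
  have q: "q \<in> distr_on \<kappa>"
    unfolding q_def using Q card_signs_pos[of V \<kappa> t]
    by (intro distr_on_average) (auto simp: card_gt_0_iff)
  have "(\<Sum>i\<in>{1..\<kappa>}. q i * loss i yt)
      = (\<Sum>\<epsilon>\<in>signs V \<kappa> t. \<Sum>i\<in>{1..\<kappa>}. Q \<epsilon> i * loss i yt) / card (signs V \<kappa> t)" for yt
    unfolding q_def by (subst sum.swap) (simp add: sum_divide_distrib sum_distrib_right)
  then have "?value q \<le> Rel Las V \<kappa> C lam K (t - 1) y"
    using rel_step[OF t \<kappa> Q] by simp
  moreover have "bdd_below (?value ` distr_on \<kappa>)"
  proof (rule bdd_belowI2)
    fix p assume "p \<in> distr_on \<kappa>"
    then have "0 \<le> (\<Sum>i\<in>{1..\<kappa>}. p i * loss i 1)"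
      by (intro sum_nonneg) (auto simp: distr_on_def loss_def)
    moreover have "(\<Sum>i\<in>{1..\<kappa>}. p i * loss i 1) + Rel Las V \<kappa> C lam K t (y(t := 1)) \<le> ?value p"
      using \<kappa> by (intro Max_ge) auto
    ultimately show "Rel Las V \<kappa> C lam K t (y(t := 1)) \<le> ?value p" by linarith
  qed
  ultimately show ?thesis using cINF_lower[OF _ q] by (meson order_trans)
qed

lemma rel_minimizer_step:
  fixes Las :: "(nat set \<Rightarrow> (nat \<Rightarrow> nat) \<Rightarrow> 'v::real_inner) set"
  assumes Las: "Las \<subseteq> lasserre V \<kappa> r d B c" and \<kappa>: "1 \<le> \<kappa>" and lam: "0 \<le> lam"
    and C_nonneg: "\<forall>cc\<in>C. \<forall>\<alpha>\<in>asg (fst cc) \<kappa>. 0 \<le> snd cc \<alpha>"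
    and y: "\<forall>s\<in>{1..<t}. y s \<in> {1..\<kappa>}" and t: "t \<in> {1..V}"
    and qh: "\<forall>\<epsilon>\<in>signs V \<kappa> t. qh \<epsilon> \<in> distr_on \<kappa> \<and>
      (\<forall>q\<in>distr_on \<kappa>.
         Max ((\<lambda>yt. (SUP U\<in>Las. obj V \<kappa> C lam t (y(t := yt)) \<epsilon> U) - qh \<epsilon> yt) ` {1..\<kappa>})
         \<le> Max ((\<lambda>yt. (SUP U\<in>Las. obj V \<kappa> C lam t (y(t := yt)) \<epsilon> U) - q yt) ` {1..\<kappa>}))"
  shows "Max ((\<lambda>yt. (\<Sum>\<epsilon>\<in>signs V \<kappa> t. \<Sum>i\<in>{1..\<kappa>}. qh \<epsilon> i * loss i yt) / real (card (signs V \<kappa> t))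
                  + Rel Las V \<kappa> C lam K t (y(t := yt))) ` {1..\<kappa>})
      \<le> Rel Las V \<kappa> C lam K (t - 1) y"
proof (rule rel_step[OF t \<kappa>], intro ballI conjI)
  show "qh \<epsilon> \<in> distr_on \<kappa>" if "\<epsilon> \<in> signs V \<kappa> t" for \<epsilon> using qh that by blast
next
  fix \<epsilon> yt assume \<epsilon>: "\<epsilon> \<in> signs V \<kappa> t" and yt: "yt \<in> {1..\<kappa>}"
  define \<Phi> where "\<Phi> z = (SUP U\<in>Las. obj V \<kappa> C lam t (y(t := z)) \<epsilon> U)" for z
  define R where "R = (\<Sum>\<sigma>\<in>sign_vectors \<kappa>. SUP U\<in>Las. obj V \<kappa> C lam (t - 1) y (\<epsilon>(t := \<sigma>)) U)
      / card (sign_vectors \<kappa>)"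
  obtain q where q: "q \<in> distr_on \<kappa>" and "\<forall>z\<in>{1..\<kappa>}. \<Phi> z - q z \<le> R"
    using exists_round_distr[OF Las \<kappa> lam C_nonneg y t \<epsilon>] unfolding \<Phi>_def R_def by blast
  then have "Max ((\<lambda>z. \<Phi> z - q z) ` {1..\<kappa>}) \<le> R" using \<kappa> by (subst Max_le_iff) auto
  moreover have "\<Phi> yt - qh \<epsilon> yt \<le> Max ((\<lambda>z. \<Phi> z - qh \<epsilon> z) ` {1..\<kappa>})"
    using yt by (intro Max_ge) auto
  ultimately show "\<Phi> yt - qh \<epsilon> yt \<le> R" using qh \<epsilon> q unfolding \<Phi>_def by fastforce
qed

definition integral_solution :: "(nat \<Rightarrow> nat) \<Rightarrow> 'v::real_inner \<Rightarrow> nat set \<Rightarrow> (nat \<Rightarrow> nat) \<Rightarrow> 'v" where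
  "integral_solution g e S \<alpha> = (if \<forall>v\<in>S. g v = \<alpha> v then e else 0)"

lemma norm_integral_solution:
  "norm e = 1 \<Longrightarrow> (norm (integral_solution g e S \<alpha>))\<^sup>2 = of_bool (\<forall>v\<in>S. g v = \<alpha> v)"
  by (simp add: integral_solution_def)

lemma inner_integral_solution:
  "norm e = 1 \<Longrightarrow> inner (integral_solution g e S1 a1) (integral_solution g e S2 a2)
     = of_bool ((\<forall>v\<in>S1. g v = a1 v) \<and> (\<forall>v\<in>S2. g v = a2 v))"
  by (simp add: integral_solution_def dot_square_norm)

lemma agree_comb_iff:
  "consistent S1 a1 S2 a2 \<Longrightarrow>
    ((\<forall>v\<in>S1. g v = a1 v) \<and> (\<forall>v\<in>S2. g v = a2 v)) \<longleftrightarrow> (\<forall>v\<in>S1 \<union> S2. g v = comb S1 a1 S2 a2 v)"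
  unfolding consistent_def comb_def by auto

lemma integral_solution_in_lasserre:
  fixes e :: "'v::real_inner" and g :: "nat \<Rightarrow> nat"
  assumes e: "norm e = 1" and g: "\<forall>v\<in>{1..V}. g v \<in> {1..\<kappa>}"
    and pol: "\<forall>j\<in>{1..d}. (\<Sum>t\<in>{1..V}. \<Sum>i\<in>{1..\<kappa>}. (if g t = i then 1 else 0) * B j t i) \<le> c j"
  shows "integral_solution g e \<in> lasserre V \<kappa> r d B c"
proof -
  let ?U = "integral_solution g e"
  have polytope: "(\<Sum>v\<in>{1..V}. \<Sum>\<beta>\<in>{1..\<kappa>}.
      (if v \<in> S \<and> \<alpha> v \<noteq> \<beta> then 0 else (norm (?U (S \<union> {v}) (comb S \<alpha> {v} (sg v \<beta>))))\<^sup>2) * B j v \<beta>)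
    \<le> c j * (norm (?U S \<alpha>))\<^sup>2" if j: "j \<in> {1..d}" for S \<alpha> j
  proof (cases "\<forall>v\<in>S. g v = \<alpha> v")
    case True
    then have "(if v \<in> S \<and> \<alpha> v \<noteq> \<beta> then 0 else (norm (?U (S \<union> {v}) (comb S \<alpha> {v} (sg v \<beta>))))\<^sup>2)
        = (if g v = \<beta> then 1 else 0)" for v \<beta>
      by (auto simp: norm_integral_solution[OF e] comb_def sg_def)
    then show ?thesis using True pol j by (simp add: norm_integral_solution[OF e])
  next
    case False
    then have "(if v \<in> S \<and> \<alpha> v \<noteq> \<beta> then 0 else (norm (?U (S \<union> {v}) (comb S \<alpha> {v} (sg v \<beta>))))\<^sup>2) = 0"
      for v \<beta>
      by (auto simp: norm_integral_solution[OF e] comb_def)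
    then show ?thesis using False by (auto simp: norm_integral_solution[OF e])
  qed
  have marginals: "(\<Sum>k\<in>{1..\<kappa>}. (norm (?U {i} (sg i k)))\<^sup>2) = 1" if "i \<in> {1..V}" for i
    using g that by (simp add: norm_integral_solution[OF e] sg_def)
  have orthogonal: "inner (?U S1 a1) (?U S2 a2) = 0" if inconsistent: "\<not> consistent S1 a1 S2 a2" for S1 a1 S2 a2
  proof -
    obtain v where "v \<in> S1" "v \<in> S2" "a1 v \<noteq> a2 v" using inconsistent unfolding consistent_def by blast
    then have "\<not> ((\<forall>v\<in>S1. g v = a1 v) \<and> (\<forall>v\<in>S2. g v = a2 v))" by metis
    then show ?thesis by (simp add: inner_integral_solution[OF e])
  qed
  have combined: "inner (?U S1 a1) (?U S2 a2) = inner (?U S3 a3) (?U S4 a4)"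
    if "consistent S1 a1 S2 a2" "consistent S3 a3 S4 a4" "S1 \<union> S2 = S3 \<union> S4"
      "comb S1 a1 S2 a2 = comb S3 a3 S4 a4" for S1 a1 S2 a2 S3 a3 S4 a4
    using that by (simp add: inner_integral_solution[OF e] agree_comb_iff)
  have nonneg: "0 \<le> inner (?U S1 a1) (?U S2 a2)" for S1 a1 S2 a2
    by (simp add: inner_integral_solution[OF e])
  have empty: "(norm (?U {} (\<lambda>_. undefined)))\<^sup>2 = 1"
    by (simp add: norm_integral_solution[OF e])
  show ?thesis
    unfolding lasserre_def mem_Collect_eq
    using marginals orthogonal combined nonneg empty polytope by blast
qed

lemma penalty_integral_solution:
  assumes e: "norm e = 1" and g: "\<forall>v\<in>{1..V}. g v \<in> {1..\<kappa>}"
    and C_supp: "\<forall>cc\<in>C. fst cc \<subseteq> {1..V}"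
  shows "penalty \<kappa> C (integral_solution g e) = (\<Sum>cc\<in>C. snd cc (restrict g (fst cc)))"
  unfolding penalty_def
proof (rule sum.cong[OF refl])
  fix cc assume cc: "cc \<in> C"
  let ?S = "fst cc"
  have S: "?S \<subseteq> {1..V}" using C_supp cc by blast
  then have fin: "finite (asg ?S \<kappa>)" unfolding asg_def by (intro finite_PiE finite_subset[OF S]) auto
  have g_in: "restrict g ?S \<in> asg ?S \<kappa>" using g S by (auto simp: asg_def)
  have "(\<forall>v\<in>?S. g v = \<alpha> v) \<longleftrightarrow> \<alpha> = restrict g ?S" if "\<alpha> \<in> asg ?S \<kappa>" for \<alpha>
    using that by (auto simp: asg_def PiE_iff extensional_def fun_eq_iff)
  then have "(\<Sum>\<alpha>\<in>asg ?S \<kappa>. snd cc \<alpha> * (norm (integral_solution g e ?S \<alpha>))\<^sup>2)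
      = (\<Sum>\<alpha>\<in>asg ?S \<kappa>. if \<alpha> = restrict g ?S then snd cc \<alpha> else 0)"
    by (intro sum.cong) (auto simp: norm_integral_solution[OF e])
  also have "\<dots> = snd cc (restrict g ?S)" using fin g_in by simp
  finally show "(\<Sum>\<alpha>\<in>asg ?S \<kappa>. snd cc \<alpha> * (norm (integral_solution g e ?S \<alpha>))\<^sup>2)
      = snd cc (restrict g ?S)" .
qed

text \<open>Condition (i): the supremum dominates the value at the integral solution of \<open>g\<close>.\<close>
lemma rel_final_ge:
  fixes Las :: "(nat set \<Rightarrow> (nat \<Rightarrow> nat) \<Rightarrow> 'v::euclidean_space) set"
  assumes Las: "Las = lasserre V \<kappa> r d B c" and lam: "0 \<le> lam"
    and C_supp: "\<forall>cc\<in>C. fst cc \<subseteq> {1..V}"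
    and C_nonneg: "\<forall>cc\<in>C. \<forall>\<alpha>\<in>asg (fst cc) \<kappa>. 0 \<le> snd cc \<alpha>"
    and y: "\<forall>s\<in>{1..V}. y s \<in> {1..\<kappa>}" and g: "\<forall>v\<in>{1..V}. g v \<in> {1..\<kappa>}"
    and pol: "\<forall>j\<in>{1..d}. (\<Sum>t\<in>{1..V}. \<Sum>i\<in>{1..\<kappa>}. (if g t = i then 1 else 0) * B j t i) \<le> c j"
    and K: "(\<Sum>cc\<in>C. snd cc (restrict g (fst cc))) \<le> K"
  shows "- (\<Sum>t\<in>{1..V}. loss (g t) (y t)) \<le> Rel Las V \<kappa> C lam K V y"
proof -
  define e :: 'v where "e = (SOME b. b \<in> Basis)"
  have e1: "norm e = 1" by (simp add: e_def)
  let ?U = "integral_solution g e" and ?\<epsilon> = "\<lambda>_. undefined :: nat \<Rightarrow> real"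
  have "signs V \<kappa> V = {?\<epsilon>}" by (simp add: signs_def)
  then have rel: "Rel Las V \<kappa> C lam K V y = (SUP U\<in>Las. obj V \<kappa> C lam V y ?\<epsilon> U) - real V + lam * K"
    by (simp add: Rel_def)
  have "obj V \<kappa> C lam V y ?\<epsilon> U \<le> real V" if "U \<in> Las" for U
  proof -
    have "(\<Sum>s\<in>{1..V}. marginal U s (y s)) \<le> (\<Sum>s\<in>{1..V}. 1)"
      by (rule sum_mono) (use lasserre_marginal_le_1[of U] that Las y in auto)
    moreover have "0 \<le> lam * penalty \<kappa> C U" using lam penalty_nonneg[OF C_nonneg, where U = U] by simp
    ultimately show ?thesis unfolding obj_def by (simp add: marginal_def penalty_def)
  qed
  moreover have "?U \<in> Las" unfolding Las by (rule integral_solution_in_lasserre[OF e1 g pol])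
  ultimately have "obj V \<kappa> C lam V y ?\<epsilon> ?U \<le> (SUP U\<in>Las. obj V \<kappa> C lam V y ?\<epsilon> U)"
    by (intro cSUP_upper bdd_aboveI2) auto
  moreover have "(\<Sum>s\<in>{1..V}. (norm (?U {s} (sg s (y s))))\<^sup>2) = (\<Sum>s\<in>{1..V}. 1 - loss (g s) (y s))"
    by (intro sum.cong) (auto simp: norm_integral_solution[OF e1] sg_def loss_def)
  then have "obj V \<kappa> C lam V y ?\<epsilon> ?U
      = real V - (\<Sum>t\<in>{1..V}. loss (g t) (y t)) - lam * (\<Sum>cc\<in>C. snd cc (restrict g (fst cc)))"
    using penalty_integral_solution[OF e1 g C_supp]
    unfolding obj_def penalty_def by (simp add: sum_subtractf)
  moreover have "lam * (\<Sum>cc\<in>C. snd cc (restrict g (fst cc))) \<le> lam * K"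
    using K lam by (rule mult_left_mono)
  ultimately show ?thesis unfolding rel by linarith
qed

theorem lemma3:
  fixes V \<kappa> r d :: nat
    and L :: "('x \<Rightarrow> nat) set" and x :: "nat \<Rightarrow> 'x"
    and Cs :: "nat \<Rightarrow> constr set"
    and B :: "nat \<Rightarrow> nat \<Rightarrow> nat \<Rightarrow> real" and c :: "nat \<Rightarrow> real"
    and K lam :: real
  assumes "V \<ge> 1" and "\<kappa> \<ge> 2" and "r \<ge> 1" and "lam > 0" and "K \<ge> 0"
    and L_range: "\<forall>f\<in>L. \<forall>z. f z \<in> {1..\<kappa>}"
    and C_fin: "\<forall>t\<in>{1..V}. finite (Cs t)"
    and C_wf: "\<forall>t\<in>{1..V}. \<forall>cc\<in>Cs t. fst cc \<subseteq> {1..V} \<and> (\<forall>\<alpha>\<in>asg (fst cc) \<kappa>. 0 \<le> snd cc \<alpha>)"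
    and polytope: "\<forall>M :: nat \<Rightarrow> nat \<Rightarrow> real.
        (\<forall>t\<in>{1..V}. \<forall>i\<in>{1..\<kappa>}. M t i \<in> {0, 1}) \<longrightarrow>
        ((\<exists>f\<in>L. \<forall>t\<in>{1..V}. \<forall>i\<in>{1..\<kappa>}. M t i = (if f (x t) = i then 1 else 0))
         \<longleftrightarrow> (\<forall>j\<in>{1..d}. (\<Sum>t\<in>{1..V}. \<Sum>i\<in>{1..\<kappa>}. M t i * B j t i) \<le> c j))"
  shows "admissible V \<kappa> (LK L x (allC V Cs) K) x
           (Rel (lasserre V \<kappa> r d B c :: (nat set \<Rightarrow> (nat \<Rightarrow> nat) \<Rightarrow> real ^ 'n) set)
                V \<kappa> (allC V Cs) lam K)
       \<and> (\<forall>t\<in>{1..V}. \<forall>y. (\<forall>s\<in>{1..<t}. y s \<in> {1..\<kappa>}) \<longrightarrow>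
            (\<forall>qh :: (nat \<Rightarrow> nat \<Rightarrow> real) \<Rightarrow> nat \<Rightarrow> real.
               (\<forall>\<epsilon>\<in>signs V \<kappa> t. qh \<epsilon> \<in> distr_on \<kappa> \<and>
                  (\<forall>q\<in>distr_on \<kappa>.
                     Max ((\<lambda>yt. (SUP U\<in>(lasserre V \<kappa> r d B c :: (nat set \<Rightarrow> (nat \<Rightarrow> nat) \<Rightarrow> real ^ 'n) set).
                                   obj V \<kappa> (allC V Cs) lam t (y(t := yt)) \<epsilon> U) - qh \<epsilon> yt) ` {1..\<kappa>})
                     \<le> Max ((\<lambda>yt. (SUP U\<in>(lasserre V \<kappa> r d B c :: (nat set \<Rightarrow> (nat \<Rightarrow> nat) \<Rightarrow> real ^ 'n) set).
                                   obj V \<kappa> (allC V Cs) lam t (y(t := yt)) \<epsilon> U) - q yt) ` {1..\<kappa>})))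
               \<longrightarrow> Max ((\<lambda>yt. (\<Sum>\<epsilon>\<in>signs V \<kappa> t. \<Sum>i\<in>{1..\<kappa>}. qh \<epsilon> i * loss i yt)
                                 / real (card (signs V \<kappa> t))
                              + Rel (lasserre V \<kappa> r d B c :: (nat set \<Rightarrow> (nat \<Rightarrow> nat) \<Rightarrow> real ^ 'n) set)
                                    V \<kappa> (allC V Cs) lam K t (y(t := yt))) ` {1..\<kappa>})
                   \<le> Rel (lasserre V \<kappa> r d B c :: (nat set \<Rightarrow> (nat \<Rightarrow> nat) \<Rightarrow> real ^ 'n) set)
                         V \<kappa> (allC V Cs) lam K (t - 1) y))"
proof -
  let ?Las = "lasserre V \<kappa> r d B c :: (nat set \<Rightarrow> (nat \<Rightarrow> nat) \<Rightarrow> real ^ 'n) set"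
    and ?C = "allC V Cs"
  have \<kappa>: "1 \<le> \<kappa>" and lam: "0 \<le> lam" using assms(2,4) by auto
  have C_supp: "\<forall>cc\<in>?C. fst cc \<subseteq> {1..V}"
    and C_nonneg: "\<forall>cc\<in>?C. \<forall>\<alpha>\<in>asg (fst cc) \<kappa>. 0 \<le> snd cc \<alpha>"
    using C_wf by (auto simp: allC_def)
  have final: "- (\<Sum>t\<in>{1..V}. loss (f (x t)) (y t)) \<le> Rel ?Las V \<kappa> ?C lam K V y"
    if y: "\<forall>s\<in>{1..V}. y s \<in> {1..\<kappa>}" and f: "f \<in> LK L x ?C K" for y f
  proof -
    have "f \<in> L" and K: "(\<Sum>cc\<in>?C. snd cc (restrict (\<lambda>t. f (x t)) (fst cc))) \<le> K"
      using f by (auto simp: LK_def)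
    let ?M = "\<lambda>t i. if f (x t) = i then 1 else (0::real)"
    have "\<exists>g\<in>L. \<forall>t\<in>{1..V}. \<forall>i\<in>{1..\<kappa>}. ?M t i = (if g (x t) = i then 1 else 0)"
      using \<open>f \<in> L\<close> by blast
    then have "\<forall>j\<in>{1..d}. (\<Sum>t\<in>{1..V}. \<Sum>i\<in>{1..\<kappa>}. ?M t i * B j t i) \<le> c j"
      using polytope by simp
    moreover have "\<forall>v\<in>{1..V}. f (x v) \<in> {1..\<kappa>}" using L_range \<open>f \<in> L\<close> by blast
    ultimately show ?thesis using rel_final_ge[OF refl lam C_supp C_nonneg y _ _ K] by blast
  qed
  show ?thesis
    unfolding admissible_def
    by (intro conjI ballI allI impI final rel_inf_step[OF subset_refl \<kappa> lam C_nonneg]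
        rel_minimizer_step[OF subset_refl \<kappa> lam C_nonneg]) auto
qed

end
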